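(* Consider $N$ nodes, nodes $1,\dots,N_1$ Byzantine and nodes $N_1+1,\dots,N$ honest. For $k\in\{0,1\}$ and each node $i$, under hypothesis $H_k$ the data $Y_i$ is Gaussian, $Y_i\sim\mathcal N((\mu_{1k})_i,(\sigma_{1k})_i^2)$, where $(\mu_{10})_i=M\sigma_i^2$, $(\mu_{11})_i=(M+\eta_i)\sigma_i^2$, $(\sigma_{10})_i^2=2M\sigma_i^4$, $(\sigma_{11})_i^2=2(M+\eta_i)\sigma_i^4$, with $M>0$, $\sigma_i>0$, $\eta_i\ge0$. Each Byzantine node $i\le N_1$ reports $\tilde Y_i$, which with probability $1-P$ equals $Y_i$ and with probability $P$ equals $Y_i+\Delta_i$ under $H_0$ and $Y_i-\Delta_i$ under $H_1$; set $(\mu_{20})_i=M\sigma_i^2+\Delta_i$, $(\mu_{21})_i=(M+\eta_i)\sigma_i^2-\Delta_i$. Assume all $Y_i$ and all attack decisions are mutually independent. Let $w_{ji}^t$ be the $(j,i)$ entry of $W^t$, where $W=I-\epsilon\,\mathrm{diag}(1/w_1,\dots,1/w_N)L$. Let $U$ be the family of all subsets $A\subseteq\{1,\dots,N_1\}$, $A^c=\{1,\dots,N_1\}\setminus A$, $m_A=|A|$, and $(\mu_k)_A=\sum_{u\in A}w_{ju}^t(\mu_{1k})_u+\sum_{u\in A^c}w_{ju}^t(\mu_{2k})_u$. Let $\tilde\Lambda_j^t=\sum_{i=1}^{N_1}w_{ji}^t\tilde Y_i+\sum_{i=N_1+1}^N w_{ji}^tY_i$, and let node $j$ decide $H_1$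 at iteration $t$ iff $\tilde\Lambda_j^t>\lambda$. Then the probability of detection $P_d^t(j)=\Pr(\tilde\Lambda_j^t>\lambda\mid H_1)$ and the probability of false alarm $P_f^t(j)=\Pr(\tilde\Lambda_j^t>\lambda\mid H_0)$ are $$P_d^t(j)=\sum_{A\in U}P^{N_1-m_A}(1-P)^{m_A}\,Q\!\left(\frac{\lambda-(\mu_1)_A-\sum_{i=N_1+1}^N w_{ji}^t(\mu_{11})_i}{\sqrt{\sum_{i=1}^N (w_{ji}^t(\sigma_{11})_i)^2}}\right),$$ $$P_f^t(j)=\sum_{A\in U}P^{N_1-m_A}(1-P)^{m_A}\,Q\!\left(\frac{\lambda-(\mu_0)_A-\sum_{i=N_1+1}^N w_{ji}^t(\mu_{10})_i}{\sqrt{\sum_{i=1}^N (w_{ji}^t(\sigma_{10})_i)^2}}\right).$$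
   Context: $Q(x)=\Pr(Z>x)$ for $Z\sim\mathcal N(0,1)$. The network is an undirected graph on $N$ nodes with Laplacian $L=D-A$ ($A$ the adjacency matrix, $D$ the diagonal degree matrix), $\epsilon>0$ is the consensus time step and $w_1,\dots,w_N>0$ are the node weights. *)

theory Defs
  imports "HOL-Probability.Probability"
begin

definition Qfun :: "real \<Rightarrow> real" where
  "Qfun x = measure (density lborel std_normal_density) {x<..}"

(* Nodes are indexed 1..N. A is the adjacency matrix of an undirected graph. *)
definition degree :: "nat \<Rightarrow> (nat \<Rightarrow> nat \<Rightarrow> real) \<Rightarrow> nat \<Rightarrow> real" where
  "degree N A i = (\<Sum>k=1..N. A i k)"

definition laplacian :: "nat \<Rightarrow> (nat \<Rightarrow> nat \<Rightarrow> real) \<Rightarrow> nat \<Rightarrow> nat \<Rightarrow> real" where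
  "laplacian N A i j = (if i = j then degree N A i else 0) - A i j"

definition consW :: "nat \<Rightarrow> (nat \<Rightarrow> nat \<Rightarrow> real) \<Rightarrow> real \<Rightarrow> (nat \<Rightarrow> real) \<Rightarrow> nat \<Rightarrow> nat \<Rightarrow> real" where
  "consW N A eps w i j = (if i = j then 1 else 0) - eps * (1 / w i) * laplacian N A i j"

fun matpow :: "nat \<Rightarrow> (nat \<Rightarrow> nat \<Rightarrow> real) \<Rightarrow> nat \<Rightarrow> nat \<Rightarrow> nat \<Rightarrow> real" where
  "matpow N B 0 i j = (if i = j then 1 else 0)"
| "matpow N B (Suc t) i j = (\<Sum>k=1..N. matpow N B t i k * B k j)"

(* hypothesis index k \<in> {0,1} *)
definition mu1 :: "nat \<Rightarrow> real \<Rightarrow> (nat \<Rightarrow> real) \<Rightarrow> (nat \<Rightarrow> real) \<Rightarrow> nat \<Rightarrow> real" where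
  "mu1 k Md sig eta i = (if k = 0 then Md * sig i ^ 2 else (Md + eta i) * sig i ^ 2)"

definition sd1 :: "nat \<Rightarrow> real \<Rightarrow> (nat \<Rightarrow> real) \<Rightarrow> (nat \<Rightarrow> real) \<Rightarrow> nat \<Rightarrow> real" where
  "sd1 k Md sig eta i = (if k = 0 then sqrt (2 * Md * sig i ^ 4) else sqrt (2 * (Md + eta i) * sig i ^ 4))"

definition mu2 :: "nat \<Rightarrow> real \<Rightarrow> (nat \<Rightarrow> real) \<Rightarrow> (nat \<Rightarrow> real) \<Rightarrow> (nat \<Rightarrow> real) \<Rightarrow> nat \<Rightarrow> real" where
  "mu2 k Md sig eta Delta i = (if k = 0 then Md * sig i ^ 2 + Delta i else (Md + eta i) * sig i ^ 2 - Delta i)"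

end

theory Submission
  imports Defs
begin

text \<open>
  Condition on the attack pattern, i.e. on the set A of Byzantine nodes that report truthfully.
  On that event the statistic is a fixed linear combination of the independent Gaussians Y_i plus
  the deterministic shift of the attacking nodes, so its tail probability is a value of Q.
  The pattern is determined by the attack decisions alone, hence independent of the data, and has
  probability P^(N1-|A|) (1-P)^|A|. Summing over the disjoint patterns gives the formula; the
  variance is nonzero because every row of W^t sums to 1.
\<close>

lemma (in prob_space) prob_normal_greater:
  assumes Z: "distributed M lborel Z (normal_density \<mu> \<sigma>)" and "\<sigma> > 0"
  shows "prob {x\<in>space M. Z x > a} = Qfun ((a - \<mu>) / \<sigma>)"
proof -
  let ?Z0 = "\<lambda>x. (Z x - \<mu>) / \<sigma>"
  have Z0: "distributed M lborel ?Z0 std_normal_density"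
    using Z normal_standard_normal_convert[OF \<open>\<sigma> > 0\<close>] by simp
  have "{x\<in>space M. Z x > a} = ?Z0 -` {(a - \<mu>) / \<sigma><..} \<inter> space M"
    using \<open>\<sigma> > 0\<close> by (auto simp: divide_strict_right_mono field_simps)
  also have "prob \<dots> = measure (distr M lborel ?Z0) {(a - \<mu>) / \<sigma><..}"
    using distributed_measurable[OF Z0] by (simp add: measure_distr)
  also have "\<dots> = Qfun ((a - \<mu>) / \<sigma>)"
    unfolding Qfun_def using Z0 by (simp add: distributed_distr_eq_density)
  finally show ?thesis .
qed

lemma (in prob_space) indep_normal_lincomb_distributed:
  assumes "finite I" and indep: "indep_vars (\<lambda>_. borel) X I"
    and X: "\<And>i. i \<in> I \<Longrightarrow> distributed M lborel (X i) (normal_density (m i) (s i))"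
    and s: "\<And>i. i \<in> I \<Longrightarrow> s i > 0"
    and "\<exists>i\<in>I. c i \<noteq> 0"
  shows "distributed M lborel (\<lambda>x. \<Sum>i\<in>I. c i * X i x)
           (normal_density (\<Sum>i\<in>I. c i * m i) (sqrt (\<Sum>i\<in>I. (c i * s i)\<^sup>2)))"
proof -
  \<comment> \<open>\<open>sum_indep_normal\<close> needs nondegenerate summands, so zero coefficients are dropped first.\<close>
  define I' where "I' = {i\<in>I. c i \<noteq> 0}"
  have "I' \<subseteq> I" "finite I'" "I' \<noteq> {}"
    using assms by (auto simp: I'_def intro: finite_subset)
  have "indep_vars (\<lambda>_. borel) (\<lambda>i x. c i * X i x) I'"
    using indep_vars_compose2[OF indep_vars_subset[OF indep \<open>I' \<subseteq> I\<close>], of "\<lambda>i y. c i * y"]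
    by simp
  moreover have "distributed M lborel (\<lambda>x. c i * X i x) (normal_density (c i * m i) (\<bar>c i\<bar> * s i))"
    if "i \<in> I'" for i
    using normal_density_affine[OF X s, of i "c i" 0] that by (simp add: I'_def)
  ultimately have "distributed M lborel (\<lambda>x. \<Sum>i\<in>I'. c i * X i x)
      (normal_density (\<Sum>i\<in>I'. c i * m i) (sqrt (\<Sum>i\<in>I'. (\<bar>c i\<bar> * s i)\<^sup>2)))"
    using s \<open>finite I'\<close> \<open>I' \<noteq> {}\<close> by (intro sum_indep_normal) (auto simp: I'_def)
  moreover have "(\<Sum>i\<in>I'. f i) = (\<Sum>i\<in>I. f i)" if "\<And>i. c i = 0 \<Longrightarrow> f i = 0" for f :: "'b \<Rightarrow> real"
    using that \<open>finite I\<close> \<open>I' \<subseteq> I\<close> by (intro sum.mono_neutral_left) (auto simp: I'_def)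
  ultimately show ?thesis
    by (simp add: power_mult_distrib)
qed

lemma (in prob_space) prob_indep_normal_lincomb_greater:
  assumes "finite I" and "indep_vars (\<lambda>_. borel) X I"
    and "\<And>i. i \<in> I \<Longrightarrow> distributed M lborel (X i) (normal_density (m i) (s i))"
    and s: "\<And>i. i \<in> I \<Longrightarrow> s i > 0"
    and "\<exists>i\<in>I. c i \<noteq> 0"
  shows "prob {x\<in>space M. (\<Sum>i\<in>I. c i * X i x) + d > a}
       = Qfun ((a - d - (\<Sum>i\<in>I. c i * m i)) / sqrt (\<Sum>i\<in>I. (c i * s i)\<^sup>2))"
proof -
  obtain i where "i \<in> I" "c i \<noteq> 0" using assms by blast
  then have "(\<Sum>i\<in>I. (c i * s i)\<^sup>2) > 0"
    using \<open>finite I\<close> by (intro sum_pos2) (auto dest: s)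
  with prob_normal_greater[OF indep_normal_lincomb_distributed[OF assms]]
  have "prob {x\<in>space M. (\<Sum>i\<in>I. c i * X i x) > a - d}
      = Qfun ((a - d - (\<Sum>i\<in>I. c i * m i)) / sqrt (\<Sum>i\<in>I. (c i * s i)\<^sup>2))"
    by simp
  moreover have "{x\<in>space M. (\<Sum>i\<in>I. c i * X i x) + d > a} = {x\<in>space M. (\<Sum>i\<in>I. c i * X i x) > a - d}"
    by auto
  ultimately show ?thesis by simp
qed

lemma (in prob_space) prob_indep_vars_conj:
  assumes indep: "indep_vars M' X I" and "J \<subseteq> I" "K \<subseteq> I" "J \<inter> K = {}"
    and [measurable]: "Measurable.pred (PiM J M') P" "Measurable.pred (PiM K M') Q"
  shows "prob {x\<in>space M. P (\<lambda>i\<in>J. X i x) \<and> Q (\<lambda>i\<in>K. X i x)}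
       = prob {x\<in>space M. P (\<lambda>i\<in>J. X i x)} * prob {x\<in>space M. Q (\<lambda>i\<in>K. X i x)}"
proof -
  have IV: "indep_var (PiM J M') (\<lambda>x. \<lambda>i\<in>J. X i x) (PiM K M') (\<lambda>x. \<lambda>i\<in>K. X i x)"
    using indep_var_restrict[OF indep] assms(2-4) by blast
  note rv = measurable_space[OF indep_var_rv1[OF IV]] measurable_space[OF indep_var_rv2[OF IV]]
  have "{v\<in>space (PiM J M'). P v} \<in> sets (PiM J M')" "{v\<in>space (PiM K M'). Q v} \<in> sets (PiM K M')"
    by measurable
  moreover have "{x\<in>space M. P (\<lambda>i\<in>J. X i x) \<and> Q (\<lambda>i\<in>K. X i x)}
      = (\<lambda>x. (\<lambda>i\<in>J. X i x, \<lambda>i\<in>K. X i x)) -` ({v\<in>space (PiM J M'). P v} \<times> {v\<in>space (PiM K M'). Q v}) \<inter> space M"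
    "{x\<in>space M. P (\<lambda>i\<in>J. X i x)} = (\<lambda>x. \<lambda>i\<in>J. X i x) -` {v\<in>space (PiM J M'). P v} \<inter> space M"
    "{x\<in>space M. Q (\<lambda>i\<in>K. X i x)} = (\<lambda>x. \<lambda>i\<in>K. X i x) -` {v\<in>space (PiM K M'). Q v} \<inter> space M"
    using rv by auto
  ultimately show ?thesis
    using indep_varD[OF IV] by simp
qed

lemma (in prob_space) indep_vars_reindex:
  assumes indep: "indep_vars M' X (f ` I)" and inj: "inj_on f I"
  shows "indep_vars (\<lambda>i. M' (f i)) (\<lambda>i. X (f i)) I"
  unfolding indep_vars_def2 indep_sets_def
proof (intro conjI ballI allI impI)
  let ?F = "\<lambda>z. {X z -` A \<inter> space M |A. A \<in> sets (M' z)}"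
  have rv: "\<forall>z\<in>f ` I. random_variable (M' z) (X z)" and F: "indep_sets ?F (f ` I)"
    using indep by (auto simp: indep_vars_def2)
  fix i assume "i \<in> I"
  then show "random_variable (M' (f i)) (X (f i))" "?F (f i) \<subseteq> events"
    using rv F by (auto simp: indep_sets_def)
next
  let ?F = "\<lambda>z. {X z -` A \<inter> space M |A. A \<in> sets (M' z)}"
  have F: "indep_sets ?F (f ` I)" using indep by (simp add: indep_vars_def2)
  fix K A assume K: "K \<subseteq> I" "K \<noteq> {}" "finite K" and A: "A \<in> Pi K (\<lambda>i. ?F (f i))"
  have injK: "inj_on f K" using inj K(1) by (rule inj_on_subset)
  let ?A = "\<lambda>z. A (the_inv_into K f z)"
  have A': "?A (f i) = A i" if "i \<in> K" for i using the_inv_into_f_f[OF injK that] by simp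
  have "?A \<in> Pi (f ` K) ?F"
  proof
    fix z assume "z \<in> f ` K"
    then obtain i where "i \<in> K" "z = f i" by blast
    then show "?A z \<in> ?F z" using A by (simp add: A' Pi_def)
  qed
  then have "prob (\<Inter>z\<in>f ` K. ?A z) = (\<Prod>z\<in>f ` K. prob (?A z))"
    using F K by (intro indep_setsD) auto
  moreover have "(\<Inter>z\<in>f ` K. ?A z) = (\<Inter>i\<in>K. A i)"
    using A' by (simp add: image_image cong: INF_cong)
  ultimately show "prob (\<Inter>i\<in>K. A i) = (\<Prod>i\<in>K. prob (A i))"
    by (simp add: prod.reindex[OF injK] A' cong: prod.cong)
qed

lemma (in prob_space) prob_indep_events_pattern:
  assumes indep: "indep_vars (\<lambda>_. borel) (\<lambda>i x. if B i x then 1 else 0 :: real) J"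
    and "finite J" "S \<subseteq> J"
    and p: "\<And>i. i \<in> J \<Longrightarrow> prob {x\<in>space M. B i x} = p"
  shows "prob {x\<in>space M. \<forall>i\<in>J. B i x \<longleftrightarrow> i \<notin> S} = p ^ card (J - S) * (1 - p) ^ card S"
proof (cases "J = {}")
  case True
  then show ?thesis using \<open>S \<subseteq> J\<close> prob_space by simp
next
  case False
  let ?X = "\<lambda>i x. if B i x then 1 else 0 :: real"
  let ?A = "\<lambda>i. {if i \<in> S then 0 else 1 :: real}"
  have "{x\<in>space M. \<forall>i\<in>J. B i x \<longleftrightarrow> i \<notin> S} = (\<Inter>i\<in>J. ?X i -` ?A i \<inter> space M)"
    using False by (auto split: if_splits)
  moreover have "prob (\<Inter>i\<in>J. ?X i -` ?A i \<inter> space M) = (\<Prod>i\<in>J. prob (?X i -` ?A i \<inter> space M))"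
    using indep_varsD[OF indep False \<open>finite J\<close>] by simp
  moreover have "prob (?X i -` ?A i \<inter> space M) = (if i \<in> S then 1 - p else p)" if "i \<in> J" for i
  proof -
    have "?X i \<in> borel_measurable M"
      using indep that unfolding indep_vars_def by blast
    then have "?X i -` {1} \<inter> space M \<in> events"
      by (rule measurable_sets) simp
    moreover have "?X i -` {1} \<inter> space M = {x\<in>space M. B i x}"
      "?X i -` ?A i \<inter> space M = (if i \<in> S then space M - {x\<in>space M. B i x} else {x\<in>space M. B i x})"
      by (auto split: if_splits)
    ultimately show ?thesis
      using p[OF that] by (simp add: prob_compl)
  qed
  ultimately show ?thesis
    using \<open>finite J\<close> \<open>S \<subseteq> J\<close>
    by (simp add: prod.If_cases Int_absorb1 Diff_eq[symmetric] Int_commute)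
qed

lemma sum_shifted_on_subset:
  fixes c y \<delta> :: "'i \<Rightarrow> real"
  assumes "finite I" "J \<subseteq> I" and b: "\<And>i. i \<in> J \<Longrightarrow> b i \<longleftrightarrow> i \<notin> S"
  shows "(\<Sum>i\<in>J. c i * (if b i then y i + \<delta> i else y i)) + (\<Sum>i\<in>I - J. c i * y i)
       = (\<Sum>i\<in>I. c i * y i) + (\<Sum>i\<in>J - S. c i * \<delta> i)"
proof -
  have "finite J" using assms finite_subset by blast
  have "{i\<in>J. b i} = J - S" using b by auto
  then have "(\<Sum>i\<in>J. if b i then c i * \<delta> i else 0) = (\<Sum>i\<in>J - S. c i * \<delta> i)"
    using sum.inter_filter[OF \<open>finite J\<close>, of "\<lambda>i. c i * \<delta> i" b] by simp
  moreover have "(\<Sum>i\<in>J. c i * (if b i then y i + \<delta> i else y i))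
      = (\<Sum>i\<in>J. c i * y i) + (\<Sum>i\<in>J. if b i then c i * \<delta> i else 0)"
    unfolding sum.distrib[symmetric] by (rule sum.cong) (auto simp: algebra_simps)
  moreover have "(\<Sum>i\<in>J. c i * y i) + (\<Sum>i\<in>I - J. c i * y i) = (\<Sum>i\<in>I. c i * y i)"
    using sum.subset_diff[OF \<open>J \<subseteq> I\<close> \<open>finite I\<close>, of "\<lambda>i. c i * y i"] by (simp add: add.commute)
  ultimately show ?thesis by simp
qed

lemma row_sum_matpow:
  assumes "\<And>i. i \<in> {1..N} \<Longrightarrow> (\<Sum>j=1..N. B i j) = 1" and "i \<in> {1..N}"
  shows "(\<Sum>j=1..N. matpow N B t i j) = 1"
  using assms(2)
proof (induction t arbitrary: i)
  case 0
  then show ?case by (simp add: sum.delta)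
next
  case (Suc t)
  have "(\<Sum>j=1..N. matpow N B (Suc t) i j) = (\<Sum>k=1..N. \<Sum>j=1..N. matpow N B t i k * B k j)"
    unfolding matpow.simps by (rule sum.swap)
  also have "\<dots> = (\<Sum>k=1..N. matpow N B t i k * (\<Sum>j=1..N. B k j))"
    by (simp add: sum_distrib_left)
  also have "\<dots> = 1" using Suc assms(1) by simp
  finally show ?case .
qed

lemma row_sum_consW:
  assumes "i \<in> {1..N}"
  shows "(\<Sum>j=1..N. consW N A eps w i j) = 1"
proof -
  have "(\<Sum>j=1..N. laplacian N A i j) = 0"
    using assms by (simp add: laplacian_def degree_def sum_subtractf sum.delta)
  moreover have "(\<Sum>j=1..N. consW N A eps w i j)
      = (\<Sum>j=1..N. if i = j then 1 else 0) - eps * (1 / w i) * (\<Sum>j=1..N. laplacian N A i j)"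
    by (simp add: consW_def sum_subtractf sum_distrib_left)
  ultimately show ?thesis
    using assms by simp
qed

locale gaussian_attack_model = prob_space +
  fixes I J :: "'i set" and Y :: "'i \<Rightarrow> 'a \<Rightarrow> real" and B :: "'i \<Rightarrow> 'a \<Rightarrow> bool"
    and m s :: "'i \<Rightarrow> real" and p :: real
  assumes finite_I: "finite I" and J_subset_I: "J \<subseteq> I"
    and indep: "indep_vars (\<lambda>_. borel)
      (\<lambda>z. case z of Inl i \<Rightarrow> Y i | Inr i \<Rightarrow> (\<lambda>x. if B i x then 1 else 0)) (Inl ` I \<union> Inr ` J)"
    and Y_normal: "\<And>i. i \<in> I \<Longrightarrow> distributed M lborel (Y i) (normal_density (m i) (s i))"
    and s_pos: "\<And>i. i \<in> I \<Longrightarrow> s i > 0"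
    and prob_B: "\<And>i. i \<in> J \<Longrightarrow> prob {x\<in>space M. B i x} = p"
begin

lemma finite_J: "finite J"
  using finite_I J_subset_I by (rule finite_subset[rotated])

lemma indep_Y: "indep_vars (\<lambda>_. borel) Y I"
  using indep_vars_reindex[OF indep_vars_subset[OF indep], of Inl I] by simp

lemma indep_B: "indep_vars (\<lambda>_. borel) (\<lambda>i x. if B i x then 1 else 0 :: real) J"
  using indep_vars_reindex[OF indep_vars_subset[OF indep], of Inr J] by simp

lemma measurable_Y: "i \<in> I \<Longrightarrow> Y i \<in> borel_measurable M"
  using indep_Y unfolding indep_vars_def by blast

lemma pred_B: "i \<in> J \<Longrightarrow> Measurable.pred M (B i)"
proof -
  assume "i \<in> J"
  then have "(\<lambda>x. if B i x then 1 else 0 :: real) \<in> borel_measurable M"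
    using indep_B unfolding indep_vars_def by blast
  then have "Measurable.pred M (\<lambda>x. (if B i x then 1 else 0 :: real) = 1)"
    by measurable
  moreover have "(\<lambda>x. (if B i x then 1 else 0 :: real) = 1) = B i"
    by (simp add: fun_eq_iff)
  ultimately show ?thesis by simp
qed

text \<open>\<open>S\<close> is the paper's \<open>A\<close>: the Byzantine nodes that report their true data.\<close>

definition attack_pattern :: "'i set \<Rightarrow> 'a set" where
  "attack_pattern S = {x\<in>space M. \<forall>i\<in>J. B i x \<longleftrightarrow> i \<notin> S}"

lemma sets_attack_pattern: "attack_pattern S \<in> events"
  unfolding attack_pattern_def
proof (rule sets.sets_Collect_finite_All[OF _ finite_J])
  fix i assume "i \<in> J"
  note [measurable] = pred_B[OF this]
  show "{x\<in>space M. B i x \<longleftrightarrow> i \<notin> S} \<in> events" by measurable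
qed

lemma prob_attack_pattern:
  assumes "S \<subseteq> J"
  shows "prob (attack_pattern S) = p ^ (card J - card S) * (1 - p) ^ card S"
  using prob_indep_events_pattern[OF indep_B finite_J assms prob_B] finite_J assms
  by (simp add: attack_pattern_def card_Diff_subset finite_subset)

lemma prob_attack_pattern_lincomb_greater:
  assumes "\<exists>i\<in>I. c i \<noteq> 0"
  shows "prob {x\<in>attack_pattern S. (\<Sum>i\<in>I. c i * Y i x) + d > lam}
       = prob (attack_pattern S) * Qfun ((lam - d - (\<Sum>i\<in>I. c i * m i)) / sqrt (\<Sum>i\<in>I. (c i * s i)\<^sup>2))"
proof -
  let ?X = "\<lambda>z. case z of Inl i \<Rightarrow> Y i | Inr i \<Rightarrow> (\<lambda>x. if B i x then 1 else 0 :: real)"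
  let ?gauss = "\<lambda>v. (\<Sum>i\<in>I. c i * v (Inl i)) + d > lam"
  let ?pattern = "\<lambda>v. \<forall>i\<in>J. v (Inr i) = (if i \<in> S then 0 else 1 :: real)"
  have "Measurable.pred (PiM (Inl ` I) (\<lambda>_. borel)) ?gauss"
    by measurable
  moreover have "Measurable.pred (PiM (Inr ` J) (\<lambda>_. borel)) ?pattern"
    using finite_J by measurable
  ultimately have "prob {x\<in>space M. ?gauss (\<lambda>z\<in>Inl ` I. ?X z x) \<and> ?pattern (\<lambda>z\<in>Inr ` J. ?X z x)}
    = prob {x\<in>space M. ?gauss (\<lambda>z\<in>Inl ` I. ?X z x)} * prob {x\<in>space M. ?pattern (\<lambda>z\<in>Inr ` J. ?X z x)}"
    by (intro prob_indep_vars_conj[OF indep]) auto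
  moreover have "{x\<in>space M. ?pattern (\<lambda>z\<in>Inr ` J. ?X z x)} = attack_pattern S"
    by (auto simp: attack_pattern_def split: if_splits)
  moreover have "{x\<in>space M. ?gauss (\<lambda>z\<in>Inl ` I. ?X z x)} = {x\<in>space M. (\<Sum>i\<in>I. c i * Y i x) + d > lam}"
    by auto
  moreover have "{x\<in>attack_pattern S. (\<Sum>i\<in>I. c i * Y i x) + d > lam}
      = {x\<in>space M. ?gauss (\<lambda>z\<in>Inl ` I. ?X z x) \<and> ?pattern (\<lambda>z\<in>Inr ` J. ?X z x)}"
    by (auto simp: attack_pattern_def split: if_splits)
  ultimately show ?thesis
    using prob_indep_normal_lincomb_greater[OF finite_I indep_Y Y_normal s_pos assms] by simp
qed

lemma prob_attacked_lincomb_greater: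
  assumes "\<exists>i\<in>I. c i \<noteq> 0"
  shows "prob {x\<in>space M. (\<Sum>i\<in>J. c i * (if B i x then Y i x + \<delta> i else Y i x)) + (\<Sum>i\<in>I - J. c i * Y i x) > lam}
   = (\<Sum>S\<in>Pow J. p ^ (card J - card S) * (1 - p) ^ card S *
        Qfun ((lam - ((\<Sum>u\<in>S. c u * m u) + (\<Sum>u\<in>J - S. c u * (m u + \<delta> u))) - (\<Sum>i\<in>I - J. c i * m i))
              / sqrt (\<Sum>i\<in>I. (c i * s i)\<^sup>2)))"
proof -
  define G where "G S = {x\<in>attack_pattern S. (\<Sum>i\<in>I. c i * Y i x) + (\<Sum>i\<in>J - S. c i * \<delta> i) > lam}" for S
  have "{x\<in>space M. (\<Sum>i\<in>J. c i * (if B i x then Y i x + \<delta> i else Y i x)) + (\<Sum>i\<in>I - J. c i * Y i x) > lam}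
      = (\<Union>S\<in>Pow J. G S)" (is "?event = _")
  proof (intro equalityI subsetI)
    fix x assume "x \<in> ?event"
    then have "x \<in> G {i\<in>J. \<not> B i x}"
      using sum_shifted_on_subset[OF finite_I J_subset_I, where b = "\<lambda>i. B i x" and S = "{i\<in>J. \<not> B i x}"]
      by (auto simp: G_def attack_pattern_def)
    then show "x \<in> (\<Union>S\<in>Pow J. G S)" by (rule UN_I[rotated]) auto
  next
    fix x assume "x \<in> (\<Union>S\<in>Pow J. G S)"
    then obtain S where "x \<in> G S" by blast
    then show "x \<in> ?event"
      using sum_shifted_on_subset[OF finite_I J_subset_I, where b = "\<lambda>i. B i x" and S = S]
      by (auto simp: G_def attack_pattern_def)
  qed
  moreover have "disjoint_family_on G (Pow J)"
    by (auto simp: disjoint_family_on_def G_def attack_pattern_def)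
  moreover have "G S \<in> events" for S
  proof -
    have "(\<lambda>x. (\<Sum>i\<in>I. c i * Y i x) + (\<Sum>i\<in>J - S. c i * \<delta> i)) \<in> borel_measurable M"
      using measurable_Y by (intro borel_measurable_add borel_measurable_sum borel_measurable_times) auto
    then have "{x\<in>space M. (\<Sum>i\<in>I. c i * Y i x) + (\<Sum>i\<in>J - S. c i * \<delta> i) > lam} \<in> events"
      by measurable
    moreover have "G S = attack_pattern S \<inter> {x\<in>space M. (\<Sum>i\<in>I. c i * Y i x) + (\<Sum>i\<in>J - S. c i * \<delta> i) > lam}"
      by (auto simp: G_def attack_pattern_def)
    ultimately show ?thesis
      using sets_attack_pattern by simp
  qed
  moreover have "prob (G S) = p ^ (card J - card S) * (1 - p) ^ card S *
        Qfun ((lam - ((\<Sum>u\<in>S. c u * m u) + (\<Sum>u\<in>J - S. c u * (m u + \<delta> u))) - (\<Sum>i\<in>I - J. c i * m i))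
              / sqrt (\<Sum>i\<in>I. (c i * s i)\<^sup>2))" if "S \<subseteq> J" for S
  proof -
    have "(\<Sum>i\<in>I. c i * m i) = (\<Sum>u\<in>S. c u * m u) + (\<Sum>u\<in>J - S. c u * m u) + (\<Sum>i\<in>I - J. c i * m i)"
      using sum.subset_diff[OF J_subset_I finite_I, of "\<lambda>i. c i * m i"]
        sum.subset_diff[OF that finite_J, of "\<lambda>i. c i * m i"] by linarith
    moreover have "(\<Sum>u\<in>J - S. c u * (m u + \<delta> u)) = (\<Sum>u\<in>J - S. c u * m u) + (\<Sum>u\<in>J - S. c u * \<delta> u)"
      by (simp add: distrib_left sum.distrib)
    ultimately have argument: "lam - (\<Sum>i\<in>J - S. c i * \<delta> i) - (\<Sum>i\<in>I. c i * m i)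
        = lam - ((\<Sum>u\<in>S. c u * m u) + (\<Sum>u\<in>J - S. c u * (m u + \<delta> u))) - (\<Sum>i\<in>I - J. c i * m i)"
      by linarith
    show ?thesis
      unfolding G_def prob_attack_pattern_lincomb_greater[OF assms] prob_attack_pattern[OF that] argument ..
  qed
  ultimately show ?thesis
    using finite_J by (simp add: finite_measure_finite_Union image_subset_iff)
qed

end

lemma sd1_pos:
  assumes "Md > 0" "sig i > 0" "eta i \<ge> 0"
  shows "sd1 k Md sig eta i > 0"
  using assms by (simp add: sd1_def add_nonneg_pos)

lemma mu2_eq_mu1_shift:
  "mu2 k Md sig eta Delta i = mu1 k Md sig eta i + (if k = 0 then Delta i else - Delta i)"
  by (simp add: mu1_def mu2_def)

theorem proposition1:
  fixes Pr :: "'a measure"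
    and N N1 j t k :: nat
    and A :: "nat \<Rightarrow> nat \<Rightarrow> real"
    and eps :: real and w :: "nat \<Rightarrow> real"
    and Md :: real and sig eta Delta :: "nat \<Rightarrow> real"
    and P lam :: real
    and Y :: "nat \<Rightarrow> 'a \<Rightarrow> real"
    and B :: "nat \<Rightarrow> 'a \<Rightarrow> bool"
  assumes "prob_space Pr"
    and adj01: "\<forall>u\<in>{1..N}. \<forall>v\<in>{1..N}. A u v = 0 \<or> A u v = 1"
    and adj_sym: "\<forall>u\<in>{1..N}. \<forall>v\<in>{1..N}. A u v = A v u"
    and adj_irrefl: "\<forall>u\<in>{1..N}. A u u = 0"
    and "eps > 0" and "\<forall>i\<in>{1..N}. w i > 0"
    and "Md > 0" and "\<forall>i\<in>{1..N}. sig i > 0" and "\<forall>i\<in>{1..N}. eta i \<ge> 0"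
    and "N1 \<le> N" and "j \<in> {1..N}"
    and "0 \<le> P" and "P \<le> 1"
    and "k \<in> {0, 1}"
    and Ydist: "\<forall>i\<in>{1..N}. distributed Pr lborel (Y i)
                   (normal_density (mu1 k Md sig eta i) (sd1 k Md sig eta i))"
    and Bev: "\<forall>i\<in>{1..N1}. {x \<in> space Pr. B i x} \<in> sets Pr"
    and Bprob: "\<forall>i\<in>{1..N1}. measure Pr {x \<in> space Pr. B i x} = P"
    and indep: "prob_space.indep_vars Pr (\<lambda>_. borel)
                  (\<lambda>z. case z of Inl i \<Rightarrow> Y i | Inr i \<Rightarrow> (\<lambda>x. if B i x then 1 else 0))
                  (Inl ` {1..N} \<union> Inr ` {1..N1})"
  shows "measure Pr {x \<in> space Pr.
            (\<Sum>i=1..N1. matpow N (consW N A eps w) t j i *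
                 (if B i x then Y i x + (if k = 0 then Delta i else - Delta i) else Y i x))
          + (\<Sum>i=N1+1..N. matpow N (consW N A eps w) t j i * Y i x) > lam}
       = (\<Sum>S\<in>Pow {1..N1}. P ^ (N1 - card S) * (1 - P) ^ card S *
            Qfun ((lam
                   - ((\<Sum>u\<in>S. matpow N (consW N A eps w) t j u * mu1 k Md sig eta u)
                      + (\<Sum>u\<in>{1..N1} - S. matpow N (consW N A eps w) t j u * mu2 k Md sig eta Delta u))
                   - (\<Sum>i=N1+1..N. matpow N (consW N A eps w) t j i * mu1 k Md sig eta i))
                  / sqrt (\<Sum>i=1..N. (matpow N (consW N A eps w) t j i * sd1 k Md sig eta i) ^ 2)))"
proof -
  have "gaussian_attack_model Pr {1..N} {1..N1} Y B (mu1 k Md sig eta) (sd1 k Md sig eta) P"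
  proof (intro gaussian_attack_model.intro gaussian_attack_model_axioms.intro)
    show "sd1 k Md sig eta i > 0" if "i \<in> {1..N}" for i
      using sd1_pos \<open>Md > 0\<close> \<open>\<forall>i\<in>{1..N}. sig i > 0\<close> \<open>\<forall>i\<in>{1..N}. eta i \<ge> 0\<close> that by blast
  qed (use \<open>prob_space Pr\<close> \<open>N1 \<le> N\<close> indep Ydist Bprob in auto)
  then interpret gaussian_attack_model Pr "{1..N}" "{1..N1}" Y B "mu1 k Md sig eta" "sd1 k Md sig eta" P .
  let ?c = "matpow N (consW N A eps w) t j"
  have "\<exists>i\<in>{1..N}. ?c i \<noteq> 0"
  proof (rule ccontr)
    assume "\<not> (\<exists>i\<in>{1..N}. ?c i \<noteq> 0)"
    then have "(\<Sum>i=1..N. ?c i) = 0" by simp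
    with row_sum_matpow[OF row_sum_consW \<open>j \<in> {1..N}\<close>] show False by simp
  qed
  moreover have "{1..N} - {1..N1} = {N1+1..N}"
    using \<open>N1 \<le> N\<close> by auto
  ultimately show ?thesis
    using prob_attacked_lincomb_greater[where \<delta> = "\<lambda>i. if k = 0 then Delta i else - Delta i" and lam = lam]
    by (simp add: mu2_eq_mu1_shift)
qed

end
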